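(* Let ${\bf S}\in\{{\bf Tmd},{\bf Tm4d}\}$. Then ${\bf S}$ cannot be characterized by a single finite deterministic logical matrix; that is, there is no logical matrix $\mathcal M=\langle M,D\rangle$ with $M$ finite such that, for all $\Gamma\cup\{\alpha\}\subseteq For$, $\Gamma\vdash_{\bf S}\alpha$ iff $\Gamma\vDash_{\mathcal M}\alpha$.
   Context: Formulas are built from a denumerable set of propositional variables by the unary connectives $\neg$, $\Box$ and the binary connective $\to$; $For$ is the set of all formulas. Abbreviations: $\Diamond\alpha:=\neg\Box\neg\alpha$, $\alpha\vee\beta:=\neg\alpha\to\beta$, $\alpha\wedge\beta:=\neg(\alpha\to\neg\beta)$. All Hilbert calculi below have as axioms all instances (over $For$) of the axiom schemas of a standard Hilbert calculus for classical propositional logic in the signature $\{\neg,\to\}$, plus the listed modal schemas, with modus ponens as the only rule; $\Gamma\vdash_{\bf L}\alpha$ means there is a derivation of $\alpha$ from $\Gamma$ in ${\bf L}$. ${\bf Tmd}$: (K) $\Box(\alpha\to\beta)\to(\Box\alpha\to\Box\beta)$; (Kdet) $\Box(\alpha\to\beta)\to(\Diamond\alpha\to\Box\beta)$; (K2) $\Diamond(\alpha\to\beta)\to(\Box\alpha\to\Diamond\beta)$; (M1) $\neg\Diamond\alpha\to\Box(\alpha\to\beta)$; (M2) $\Box\beta\to\Box(\alpha\to\beta)$; (M3) $\Diamond\beta\to\Diamond(\alpha\to\beta)$; (M4) $\Diamond\neg\alpha\to\Diamond(\alpha\to\beta)$; (T) $\Box\alpha\to\alpha$; (DN1) $\Box\alpha\to\Box\neg\neg\alpha$;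 (DN2) $\Box\neg\neg\alpha\to\Box\alpha$. ${\bf Tm4d}$ (also written ${\bf T4md}$) is ${\bf Tmd}$ plus (4) $\Box\alpha\to\Box\Box\alpha$. A (deterministic) logical matrix $\mathcal M=\langle M,D\rangle$ consists of a set $M$ with unary operations for $\neg,\Box$ and a binary operation for $\to$, and $D\subseteq M$; valuations are homomorphisms $h:For\to M$, and $\Gamma\vDash_{\mathcal M}\alpha$ iff every valuation mapping $\Gamma$ into $D$ maps $\alpha$ into $D$. *)

theory Defs
  imports Main
begin

datatype fm = Var nat | Neg fm | Box fm | Imp fm fm (infixr "\<^bold>\<rightarrow>" 25)

definition Dia :: "fm \<Rightarrow> fm" where "Dia a = Neg (Box (Neg a))"
definition Or :: "fm \<Rightarrow> fm \<Rightarrow> fm" where "Or a b = Imp (Neg a) b"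
definition And :: "fm \<Rightarrow> fm \<Rightarrow> fm" where "And a b = Neg (Imp a (Neg b))"

datatype logic = Tmd | Tm4d

inductive cpl_axiom :: "fm \<Rightarrow> bool" where
  A1: "cpl_axiom (a \<^bold>\<rightarrow> (b \<^bold>\<rightarrow> a))"
| A2: "cpl_axiom ((a \<^bold>\<rightarrow> (b \<^bold>\<rightarrow> c)) \<^bold>\<rightarrow> ((a \<^bold>\<rightarrow> b) \<^bold>\<rightarrow> (a \<^bold>\<rightarrow> c)))"
| A3: "cpl_axiom ((Neg b \<^bold>\<rightarrow> Neg a) \<^bold>\<rightarrow> ((Neg b \<^bold>\<rightarrow> a) \<^bold>\<rightarrow> b))"

inductive tmd_axiom :: "fm \<Rightarrow> bool" where
  K: "tmd_axiom (Box (a \<^bold>\<rightarrow> b) \<^bold>\<rightarrow> (Box a \<^bold>\<rightarrow> Box b))"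
| Kdet: "tmd_axiom (Box (a \<^bold>\<rightarrow> b) \<^bold>\<rightarrow> (Dia a \<^bold>\<rightarrow> Box b))"
| K2: "tmd_axiom (Dia (a \<^bold>\<rightarrow> b) \<^bold>\<rightarrow> (Box a \<^bold>\<rightarrow> Dia b))"
| M1: "tmd_axiom (Neg (Dia a) \<^bold>\<rightarrow> Box (a \<^bold>\<rightarrow> b))"
| M2: "tmd_axiom (Box b \<^bold>\<rightarrow> Box (a \<^bold>\<rightarrow> b))"
| M3: "tmd_axiom (Dia b \<^bold>\<rightarrow> Dia (a \<^bold>\<rightarrow> b))"
| M4: "tmd_axiom (Dia (Neg a) \<^bold>\<rightarrow> Dia (a \<^bold>\<rightarrow> b))"
| T: "tmd_axiom (Box a \<^bold>\<rightarrow> a)"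
| DN1: "tmd_axiom (Box a \<^bold>\<rightarrow> Box (Neg (Neg a)))"
| DN2: "tmd_axiom (Box (Neg (Neg a)) \<^bold>\<rightarrow> Box a)"

fun axiom :: "logic \<Rightarrow> fm \<Rightarrow> bool" where
  "axiom Tmd \<phi> \<longleftrightarrow> cpl_axiom \<phi> \<or> tmd_axiom \<phi>"
| "axiom Tm4d \<phi> \<longleftrightarrow> cpl_axiom \<phi> \<or> tmd_axiom \<phi> \<or> (\<exists>a. \<phi> = (Box a \<^bold>\<rightarrow> Box (Box a)))"

inductive derivable :: "logic \<Rightarrow> fm set \<Rightarrow> fm \<Rightarrow> bool" for L :: logic and \<Gamma> :: "fm set" where
  ax: "axiom L \<phi> \<Longrightarrow> derivable L \<Gamma> \<phi>"
| hyp: "\<phi> \<in> \<Gamma> \<Longrightarrow> derivable L \<Gamma> \<phi>"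
| mp: "derivable L \<Gamma> (a \<^bold>\<rightarrow> b) \<Longrightarrow> derivable L \<Gamma> a \<Longrightarrow> derivable L \<Gamma> b"

record 'a lmatrix =
  carrier :: "'a set"
  mneg :: "'a \<Rightarrow> 'a"
  mbox :: "'a \<Rightarrow> 'a"
  mimp :: "'a \<Rightarrow> 'a \<Rightarrow> 'a"
  designated :: "'a set"

definition is_matrix :: "('a, 'b) lmatrix_scheme \<Rightarrow> bool" where
  "is_matrix \<M> \<longleftrightarrow> designated \<M> \<subseteq> carrier \<M>
     \<and> (\<forall>x\<in>carrier \<M>. mneg \<M> x \<in> carrier \<M> \<and> mbox \<M> x \<in> carrier \<M>)
     \<and> (\<forall>x\<in>carrier \<M>. \<forall>y\<in>carrier \<M>. mimp \<M> x y \<in> carrier \<M>)"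

primrec eval :: "('a, 'b) lmatrix_scheme \<Rightarrow> (nat \<Rightarrow> 'a) \<Rightarrow> fm \<Rightarrow> 'a" where
  "eval \<M> v (Var n) = v n"
| "eval \<M> v (Neg a) = mneg \<M> (eval \<M> v a)"
| "eval \<M> v (Box a) = mbox \<M> (eval \<M> v a)"
| "eval \<M> v (Imp a b) = mimp \<M> (eval \<M> v a) (eval \<M> v b)"

definition valuation :: "('a, 'b) lmatrix_scheme \<Rightarrow> (fm \<Rightarrow> 'a) \<Rightarrow> bool" where
  "valuation \<M> h \<longleftrightarrow> (\<exists>v. range v \<subseteq> carrier \<M> \<and> h = eval \<M> v)"

definition matrix_conseq :: "('a, 'b) lmatrix_scheme \<Rightarrow> fm set \<Rightarrow> fm \<Rightarrow> bool" where
  "matrix_conseq \<M> \<Gamma> \<alpha> \<longleftrightarrow>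
     (\<forall>h. valuation \<M> h \<longrightarrow> h ` \<Gamma> \<subseteq> designated \<M> \<longrightarrow> h \<alpha> \<in> designated \<M>)"

definition characterizes :: "('a, 'b) lmatrix_scheme \<Rightarrow> logic \<Rightarrow> bool" where
  "characterizes \<M> L \<longleftrightarrow> (\<forall>\<Gamma> \<alpha>. derivable L \<Gamma> \<alpha> \<longleftrightarrow> matrix_conseq \<M> \<Gamma> \<alpha>)"

end

theory Submission
  imports Defs
begin

text \<open>
  Dugundji's argument. Every axiom of \<open>Tm4d\<close> (hence of \<open>Tmd\<close>) is designated in a four-valued
  matrix whose box is non-deterministic off the top value. Resolving that non-determinism
  formula by formula refutes each Dugundji formula \<open>\<delta>\<^sub>N\<close>, the disjunction of
  \<open>(\<not>\<box>)\<^sup>i\<^sup>+\<^sup>2 p\<^sub>j \<rightarrow> (\<not>\<box>)\<^sup>i\<^sup>+\<^sup>2 p\<^sub>i\<close> over \<open>i < j \<le> N\<close>, so no \<open>\<delta>\<^sub>N\<close> is a theorem.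
  In a deterministic matrix with at most \<open>N\<close> elements, however, two of \<open>p\<^sub>0, \<dots>, p\<^sub>N\<close> receive
  the same value, so some disjunct takes the value of an instance of \<open>\<alpha> \<rightarrow> \<alpha>\<close>; if the matrix
  characterized the logic, \<open>\<delta>\<^sub>N\<close> would therefore be valid in it and hence a theorem.
\<close>

datatype v4 = VT | Vt | Vf | VF

fun designated4 :: "v4 \<Rightarrow> bool" where
  "designated4 VT = True" | "designated4 Vt = True"
| "designated4 Vf = False" | "designated4 VF = False"

fun neg4 :: "v4 \<Rightarrow> v4" where
  "neg4 VT = VF" | "neg4 Vt = Vf" | "neg4 Vf = Vt" | "neg4 VF = VT"

definition imp4 :: "v4 \<Rightarrow> v4 \<Rightarrow> v4" where
  "imp4 x y = (if x = VF \<or> y = VT then VT else if x = VT \<and> y = VF then VF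
      else if designated4 x \<longrightarrow> designated4 y then Vt else Vf)"

definition box4 :: "v4 \<Rightarrow> bool \<Rightarrow> v4" where
  "box4 x b = (if x = VT then VT else if b then VF else Vf)"

text \<open>The box of a non-top value may be \<open>F\<close> or \<open>f\<close>; the choice function \<open>c\<close> fixes this
  independently for every boxed formula, so these valuations are not truth-functional.\<close>
primrec nval :: "(nat \<Rightarrow> v4) \<Rightarrow> (fm \<Rightarrow> bool) \<Rightarrow> fm \<Rightarrow> v4" where
  "nval v c (Var n) = v n"
| "nval v c (Neg x) = neg4 (nval v c x)"
| "nval v c (Box x) = box4 (nval v c x) (c x)"
| "nval v c (Imp x y) = imp4 (nval v c x) (nval v c y)"

lemma designated4_imp4 [simp]: "designated4 (imp4 x y) \<longleftrightarrow> (designated4 x \<longrightarrow> designated4 y)"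
  by (cases x; cases y; simp add: imp4_def)

lemma designated4_neg4 [simp]: "designated4 (neg4 x) \<longleftrightarrow> \<not> designated4 x"
  by (cases x; simp)

lemma designated4_box4 [simp]: "designated4 (box4 x b) \<longleftrightarrow> x = VT"
  by (cases x; simp add: box4_def)

lemma imp4_eq_VT [simp]: "imp4 x y = VT \<longleftrightarrow> x = VF \<or> y = VT"
  by (cases x; cases y; simp add: imp4_def)

lemma imp4_eq_VF [simp]: "imp4 x y = VF \<longleftrightarrow> x = VT \<and> y = VF"
  by (cases x; cases y; simp add: imp4_def)

lemma neg4_eq_VT [simp]: "neg4 x = VT \<longleftrightarrow> x = VF"
  by (cases x; simp)

lemma neg4_eq_VF [simp]: "neg4 x = VF \<longleftrightarrow> x = VT"
  by (cases x; simp)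

lemma cpl_axiom_designated: "cpl_axiom \<phi> \<Longrightarrow> designated4 (nval v c \<phi>)"
  by (induction rule: cpl_axiom.induct) auto

lemma tmd_axiom_designated: "tmd_axiom \<phi> \<Longrightarrow> designated4 (nval v c \<phi>)"
  by (induction rule: tmd_axiom.induct) (auto simp: Dia_def)

lemma axiom_designated: "axiom S \<phi> \<Longrightarrow> designated4 (nval v c \<phi>)"
  by (cases S) (auto simp: cpl_axiom_designated tmd_axiom_designated box4_def)

lemma derivable_designated:
  assumes "derivable S \<Gamma> \<phi>" and "\<forall>\<psi>\<in>\<Gamma>. designated4 (nval v c \<psi>)"
  shows "designated4 (nval v c \<phi>)"
  using assms by (induction rule: derivable.induct) (auto simp: axiom_designated)

lemma derivable_cpl_axiom: "cpl_axiom \<phi> \<Longrightarrow> derivable S \<Gamma> \<phi>"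
  by (rule derivable.ax) (cases S; simp)

lemma derivable_imp_refl: "derivable S \<Gamma> (x \<^bold>\<rightarrow> x)"
proof -
  have "derivable S \<Gamma> ((x \<^bold>\<rightarrow> ((x \<^bold>\<rightarrow> x) \<^bold>\<rightarrow> x)) \<^bold>\<rightarrow> ((x \<^bold>\<rightarrow> (x \<^bold>\<rightarrow> x)) \<^bold>\<rightarrow> (x \<^bold>\<rightarrow> x)))"
    by (intro derivable_cpl_axiom cpl_axiom.A2)
  moreover have "derivable S \<Gamma> (x \<^bold>\<rightarrow> ((x \<^bold>\<rightarrow> x) \<^bold>\<rightarrow> x))" "derivable S \<Gamma> (x \<^bold>\<rightarrow> (x \<^bold>\<rightarrow> x))"
    by (intro derivable_cpl_axiom cpl_axiom.A1)+
  ultimately show ?thesis by (blast intro: derivable.mp)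
qed

text \<open>Disjunction as \<open>(a \<rightarrow> b) \<rightarrow> b\<close>, whose introduction rules need only \<open>A1\<close> and \<open>A2\<close>.\<close>
definition disj2 :: "fm \<Rightarrow> fm \<Rightarrow> fm" where
  "disj2 a b = ((a \<^bold>\<rightarrow> b) \<^bold>\<rightarrow> b)"

definition falsum :: fm where
  "falsum = Neg (Var 0 \<^bold>\<rightarrow> Var 0)"

definition disj :: "fm list \<Rightarrow> fm" where
  "disj xs = foldr disj2 xs falsum"

lemma derivable_disj2I1:
  assumes "derivable S \<Gamma> a"
  shows "derivable S \<Gamma> (disj2 a b)"
proof -
  let ?y = "a \<^bold>\<rightarrow> b"
  have "derivable S \<Gamma> ((?y \<^bold>\<rightarrow> (a \<^bold>\<rightarrow> b)) \<^bold>\<rightarrow> ((?y \<^bold>\<rightarrow> a) \<^bold>\<rightarrow> (?y \<^bold>\<rightarrow> b)))"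
    by (intro derivable_cpl_axiom cpl_axiom.A2)
  moreover have "derivable S \<Gamma> (?y \<^bold>\<rightarrow> a)"
    using derivable.mp[OF derivable_cpl_axiom[OF cpl_axiom.A1] assms] .
  ultimately show ?thesis
    unfolding disj2_def by (blast intro: derivable.mp derivable_imp_refl)
qed

lemma derivable_disj2I2:
  assumes "derivable S \<Gamma> b"
  shows "derivable S \<Gamma> (disj2 a b)"
  unfolding disj2_def using derivable.mp[OF derivable_cpl_axiom[OF cpl_axiom.A1] assms] .

primrec neg_box_pow :: "nat \<Rightarrow> fm \<Rightarrow> fm" where
  "neg_box_pow 0 x = x"
| "neg_box_pow (Suc k) x = Neg (Box (neg_box_pow k x))"

definition dugundji_disjunct :: "nat \<Rightarrow> nat \<Rightarrow> fm" where
  "dugundji_disjunct i j = (neg_box_pow (i + 2) (Var j) \<^bold>\<rightarrow> neg_box_pow (i + 2) (Var i))"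

definition dugundji_disjuncts :: "nat \<Rightarrow> fm list" where
  "dugundji_disjuncts N = [dugundji_disjunct i j. j \<leftarrow> [0..<Suc N], i \<leftarrow> [0..<j]]"

definition dugundji :: "nat \<Rightarrow> fm" where
  "dugundji N = disj (dugundji_disjuncts N)"

lemma dugundji_disjunct_in_disjuncts:
  "i < j \<Longrightarrow> j \<le> N \<Longrightarrow> dugundji_disjunct i j \<in> set (dugundji_disjuncts N)"
  by (auto simp: dugundji_disjuncts_def simp del: upt_Suc intro!: bexI[of _ j])

lemma designated4_disj:
  "designated4 (nval v c (disj xs)) \<longleftrightarrow> (\<exists>x\<in>set xs. designated4 (nval v c x))"
  by (induction xs) (auto simp: disj_def disj2_def falsum_def)

lemma neg_box_pow_Var_inj: "neg_box_pow k (Var i) = neg_box_pow k' (Var i') \<Longrightarrow> k = k' \<and> i = i'"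
proof (induction k arbitrary: k')
  case 0
  then show ?case by (cases k') simp_all
next
  case (Suc k)
  then show ?case by (cases k') simp_all
qed

text \<open>Choosing \<open>F\<close> exactly for the boxes of \<open>(\<not>\<box>)\<^sup>i p\<^sub>i\<close> makes \<open>(\<not>\<box>)\<^sup>k p\<^sub>i\<close> (with all variables
  valued \<open>t\<close>) stay \<open>t\<close> for \<open>k \<le> i\<close>, become \<open>T\<close> at \<open>k = i + 1\<close> and \<open>F\<close> at \<open>k = i + 2\<close>.\<close>
definition refuting_choice :: "fm \<Rightarrow> bool" where
  "refuting_choice x \<longleftrightarrow> (\<exists>i. x = neg_box_pow i (Var i))"

abbreviation refuting_nval :: "fm \<Rightarrow> v4" where
  "refuting_nval \<equiv> nval (\<lambda>_. Vt) refuting_choice"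

lemma refuting_nval_below: "k \<le> i \<Longrightarrow> refuting_nval (neg_box_pow k (Var i)) = Vt"
proof (induction k)
  case 0
  then show ?case by simp
next
  case (Suc k)
  have "\<not> refuting_choice (neg_box_pow k (Var i))"
    using Suc.prems neg_box_pow_Var_inj unfolding refuting_choice_def by fastforce
  with Suc show ?case by (simp add: box4_def)
qed

lemma refuting_nval_top: "refuting_nval (neg_box_pow (Suc i) (Var i)) = VT"
proof -
  have "refuting_choice (neg_box_pow i (Var i))"
    unfolding refuting_choice_def by blast
  then show ?thesis using refuting_nval_below[of i i] by (simp add: box4_def)
qed

lemma refuting_nval_bottom: "refuting_nval (neg_box_pow (i + 2) (Var i)) = VF"
  using refuting_nval_top[of i] by (simp add: box4_def)

lemma refuting_nval_dugundji_disjunct: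
  assumes "i < j"
  shows "\<not> designated4 (refuting_nval (dugundji_disjunct i j))"
proof -
  from assms consider "i + 2 \<le> j" | "i + 2 = Suc j" by linarith
  then have "designated4 (refuting_nval (neg_box_pow (i + 2) (Var j)))"
    by cases (simp only: refuting_nval_below refuting_nval_top designated4.simps)+
  with refuting_nval_bottom[of i] show ?thesis
    by (simp add: dugundji_disjunct_def del: neg_box_pow.simps)
qed

lemma dugundji_not_derivable: "\<not> derivable S {} (dugundji N)"
proof
  assume "derivable S {} (dugundji N)"
  then have "designated4 (refuting_nval (dugundji N))"
    by (rule derivable_designated) simp
  then show False
    by (auto simp: dugundji_def designated4_disj dugundji_disjuncts_def
        refuting_nval_dugundji_disjunct)
qed

lemma characterizes_designated:
  assumes "characterizes \<M> S" and "derivable S \<Gamma> b"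
    and "valuation \<M> h" and "h ` \<Gamma> \<subseteq> designated \<M>"
  shows "h b \<in> designated \<M>"
  using assms unfolding characterizes_def matrix_conseq_def by blast

lemma characterizes_designated_disj:
  assumes "characterizes \<M> S" and "valuation \<M> h"
    and "x \<in> set xs" and "h x \<in> designated \<M>"
  shows "h (disj xs) \<in> designated \<M>"
  using assms(3,4)
proof (induction xs)
  case Nil
  then show ?case by simp
next
  case (Cons y ys)
  have from_designated: "h \<phi> \<in> designated \<M>"
    if "derivable S {z} \<phi>" and "h z \<in> designated \<M>" for z \<phi>
    using characterizes_designated[OF assms(1) that(1) assms(2)] that(2) by simp
  have hyp: "derivable S {z} z" for z
    by (rule derivable.hyp) simp
  show ?case
  proof (cases "x = y")
    case True
    with Cons.prems show ?thesis
      unfolding disj_def foldr.simps o_apply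
      by (intro from_designated[OF derivable_disj2I1[OF hyp]]) simp
  next
    case False
    with Cons have "h (disj ys) \<in> designated \<M>" by simp
    then show ?thesis
      unfolding disj_def foldr.simps o_apply
      by (intro from_designated[OF derivable_disj2I2[OF hyp]])
  qed
qed

lemma eval_neg_box_pow:
  "eval \<M> v (neg_box_pow k x) = ((mneg \<M> \<circ> mbox \<M>) ^^ k) (eval \<M> v x)"
  by (induction k) simp_all

lemma pigeonhole_upto:
  assumes "finite A" and "v ` {0..N} \<subseteq> A" and "card A \<le> N"
  obtains i j where "i < j" "j \<le> N" "v i = v j"
proof -
  have "card (v ` {0..N}) < card {0..N::nat}"
    using card_mono[OF assms(1,2)] assms(3) by simp
  then have "\<not> inj_on v {0..N}" by (rule pigeonhole)
  then obtain i j where "i \<le> N" "j \<le> N" "i \<noteq> j" "v i = v j"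
    unfolding inj_on_def by auto
  then show ?thesis using that by (metis linorder_neqE_nat)
qed

lemma characterizes_dugundji_valid:
  assumes "characterizes \<M> S" and "finite (carrier \<M>)" and "card (carrier \<M>) \<le> N"
  shows "matrix_conseq \<M> {} (dugundji N)"
  unfolding matrix_conseq_def
proof (intro allI impI)
  fix h assume h: "valuation \<M> h"
  then obtain v where v: "range v \<subseteq> carrier \<M>" "h = eval \<M> v"
    unfolding valuation_def by blast
  obtain i j where ij: "i < j" "j \<le> N" "v i = v j"
    using pigeonhole_upto[OF assms(2) _ assms(3), of v] v(1) by blast
  have "h (dugundji_disjunct i j) = h (neg_box_pow (i + 2) (Var i) \<^bold>\<rightarrow> neg_box_pow (i + 2) (Var i))"
    by (simp add: v(2) ij(3) dugundji_disjunct_def eval_neg_box_pow)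
  also have "\<dots> \<in> designated \<M>"
    using characterizes_designated[OF assms(1) derivable_imp_refl h, of "{}"] by simp
  finally show "h (dugundji N) \<in> designated \<M>"
    unfolding dugundji_def
    by (rule characterizes_designated_disj[OF assms(1) h dugundji_disjunct_in_disjuncts[OF ij(1,2)]])
qed

theorem mainTheorem5:
  fixes S :: logic and \<M> :: "'a lmatrix"
  assumes "S \<in> {Tmd, Tm4d}"
  assumes "is_matrix \<M>" and "finite (carrier \<M>)"
  shows "\<not> characterizes \<M> S"
proof
  assume ch: "characterizes \<M> S"
  then have "matrix_conseq \<M> {} (dugundji (card (carrier \<M>)))"
    using assms(3) by (rule characterizes_dugundji_valid) simp
  with ch have "derivable S {} (dugundji (card (carrier \<M>)))"
    unfolding characterizes_def by blast
  then show False using dugundji_not_derivable by blast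
qed

end
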